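(* Let $G$ be a $k$-regular graph with $n$ vertices, where $n\geq 4k$, and let $x$ be a vertex of $G$. Then $x$ is adjacent to at most $\binom{k}{2}(n-2k)+\binom{k}{3}$ cotriangles of $G$. Moreover, if this bound is attained, then the connected component of $G$ containing $x$ is isomorphic to $K_{k,k}$.
   Context: All graphs are finite and simple. A cotriangle in $G$ is an independent set of three vertices of $G$. A vertex $x$ of $G$ is adjacent to a cotriangle $T$ if $x$ is adjacent in $G$ to at least two vertices of $T$. $K_{k,k}$ is the complete bipartite graph with both parts of size $k$. *)

theory Defs
  imports Main
begin

definition simple_graph :: "'a set \<Rightarrow> ('a \<Rightarrow> 'a \<Rightarrow> bool) \<Rightarrow> bool" where
  "simple_graph V E \<longleftrightarrow> finite V \<and> (\<forall>u v. E u v \<longrightarrow> u \<in> V \<and> v \<in> V)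
     \<and> (\<forall>u v. E u v \<longrightarrow> E v u) \<and> (\<forall>v. \<not> E v v)"

definition neighbours :: "'a set \<Rightarrow> ('a \<Rightarrow> 'a \<Rightarrow> bool) \<Rightarrow> 'a \<Rightarrow> 'a set" where
  "neighbours V E x = {y \<in> V. E x y}"

definition regular :: "'a set \<Rightarrow> ('a \<Rightarrow> 'a \<Rightarrow> bool) \<Rightarrow> nat \<Rightarrow> bool" where
  "regular V E k \<longleftrightarrow> (\<forall>v \<in> V. card (neighbours V E v) = k)"

definition cotriangle :: "'a set \<Rightarrow> ('a \<Rightarrow> 'a \<Rightarrow> bool) \<Rightarrow> 'a set \<Rightarrow> bool" where
  "cotriangle V E T \<longleftrightarrow> T \<subseteq> V \<and> card T = 3 \<and> (\<forall>u \<in> T. \<forall>v \<in> T. \<not> E u v)"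

definition adj_cotriangle :: "'a set \<Rightarrow> ('a \<Rightarrow> 'a \<Rightarrow> bool) \<Rightarrow> 'a \<Rightarrow> 'a set \<Rightarrow> bool" where
  "adj_cotriangle V E x T \<longleftrightarrow> card {t \<in> T. E x t} \<ge> 2"

definition adj_cotriangles :: "'a set \<Rightarrow> ('a \<Rightarrow> 'a \<Rightarrow> bool) \<Rightarrow> 'a \<Rightarrow> 'a set set" where
  "adj_cotriangles V E x = {T. cotriangle V E T \<and> adj_cotriangle V E x T}"

definition component :: "'a set \<Rightarrow> ('a \<Rightarrow> 'a \<Rightarrow> bool) \<Rightarrow> 'a \<Rightarrow> 'a set" where
  "component V E x = {y \<in> V. (\<lambda>u v. E u v)\<^sup>*\<^sup>* x y}"

definition Kkk_verts :: "nat \<Rightarrow> (bool \<times> nat) set" where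
  "Kkk_verts k = {(b, i). i < k}"

definition Kkk_adj :: "bool \<times> nat \<Rightarrow> bool \<times> nat \<Rightarrow> bool" where
  "Kkk_adj p q \<longleftrightarrow> fst p \<noteq> fst q"

definition iso_to_Kkk :: "'a set \<Rightarrow> ('a \<Rightarrow> 'a \<Rightarrow> bool) \<Rightarrow> nat \<Rightarrow> bool" where
  "iso_to_Kkk C E k \<longleftrightarrow> (\<exists>f. bij_betw f C (Kkk_verts k) \<and>
     (\<forall>u \<in> C. \<forall>v \<in> C. E u v \<longleftrightarrow> Kkk_adj (f u) (f v)))"

end

theory Submission
  imports Defs
begin

text \<open>Let \<open>N\<close> be the neighbourhood of \<open>x\<close>. A cotriangle adjacent to \<open>x\<close> either lies in \<open>N\<close>, and
  there are at most \<open>k choose 3\<close> of those, or it is \<open>{a, b, c}\<close> with \<open>a, b \<in> N\<close> and \<open>c\<close> outside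
  \<open>N \<union> {x}\<close>. Counting the latter through the ordered pairs \<open>(a, b)\<close>: for fixed \<open>a\<close> with \<open>d\<close>
  neighbours inside \<open>N\<close> there are \<open>k - 1 - d\<close> choices for \<open>b\<close> and \<open>n - 2k + d\<close> for \<open>c\<close>, and
  \<open>(k - 1 - d) (n - 2k + d) \<le> (k - 1) (n - 2k)\<close> with equality only for \<open>d = 0\<close>, as \<open>n \<ge> 3k\<close>.
  In the extremal case \<open>N\<close> is independent and every \<open>c\<close> missed by \<open>a\<close> is missed by all of \<open>N\<close>;
  so all vertices of \<open>N\<close> share one neighbourhood \<open>R\<close> of size \<open>k\<close>, and \<open>N \<union> R\<close> is a component
  isomorphic to \<open>K\<^sub>k\<^sub>,\<^sub>k\<close>.\<close>

lemma mult_add_le_add_mult: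
  fixes p r d :: nat
  assumes "p \<le> r"
  shows "p * (r + d) \<le> (p + d) * r"
proof -
  have "p * d \<le> r * d"
    using assms by (rule mult_right_mono) simp
  then show ?thesis
    by (simp add: algebra_simps)
qed

lemma mult_add_eq_add_mult_imp_eq_0:
  fixes p r d :: nat
  assumes "p < r" and "p * (r + d) = (p + d) * r"
  shows "d = 0"
proof (rule ccontr)
  assume "d \<noteq> 0"
  then have "p * d < d * r"
    using assms(1) by (simp add: mult.commute)
  then show False
    using assms(2) by (simp add: algebra_simps)
qed

lemma component_eq_if_closed:
  assumes "S \<subseteq> V" and "\<And>y. y \<in> S \<Longrightarrow> E\<^sup>*\<^sup>* x y"
    and "\<And>u v. u \<in> S \<Longrightarrow> E u v \<Longrightarrow> v \<in> S" and "x \<in> S"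
  shows "component V E x = S"
proof
  show "component V E x \<subseteq> S"
  proof
    fix y
    assume "y \<in> component V E x"
    then have "E\<^sup>*\<^sup>* x y"
      unfolding component_def by simp
    then show "y \<in> S"
      by induction (use assms(3,4) in auto)
  qed
  show "S \<subseteq> component V E x"
    using assms(1,2) unfolding component_def by auto
qed

lemma iso_to_Kkk_if_complete_bipartite:
  assumes "finite X" "finite Y" "X \<inter> Y = {}" "card X = k" "card Y = k"
    and adj: "\<And>u v. u \<in> X \<union> Y \<Longrightarrow> v \<in> X \<union> Y \<Longrightarrow> E u v \<longleftrightarrow> (u \<in> X) \<noteq> (v \<in> X)"
  shows "iso_to_Kkk (X \<union> Y) E k"
proof -
  obtain g where g: "bij_betw g X {..<k}"
    using ex_bij_betw_finite_nat[OF \<open>finite X\<close>] \<open>card X = k\<close> atLeast0LessThan by auto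
  obtain h where h: "bij_betw h Y {..<k}"
    using ex_bij_betw_finite_nat[OF \<open>finite Y\<close>] \<open>card Y = k\<close> atLeast0LessThan by auto
  define f where "f v = (if v \<in> X then (True, g v) else (False, h v))" for v
  have "bij_betw (\<lambda>v. (True, g v)) X ({True} \<times> {..<k})"
    using g unfolding bij_betw_def inj_on_def by auto
  then have fX: "bij_betw f X ({True} \<times> {..<k})"
    by (rule bij_betw_cong[THEN iffD1, rotated]) (simp add: f_def)
  have "bij_betw (\<lambda>v. (False, h v)) Y ({False} \<times> {..<k})"
    using h unfolding bij_betw_def inj_on_def by auto
  then have fY: "bij_betw f Y ({False} \<times> {..<k})"
    by (rule bij_betw_cong[THEN iffD1, rotated]) (use \<open>X \<inter> Y = {}\<close> in \<open>auto simp: f_def\<close>)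
  have "Kkk_verts k = {True} \<times> {..<k} \<union> {False} \<times> {..<k}"
    unfolding Kkk_verts_def by auto
  then have "bij_betw f (X \<union> Y) (Kkk_verts k)"
    using bij_betw_combine[OF fX fY] by auto
  moreover have "E u v \<longleftrightarrow> Kkk_adj (f u) (f v)" if "u \<in> X \<union> Y" "v \<in> X \<union> Y" for u v
    using adj[OF that] unfolding Kkk_adj_def f_def by simp
  ultimately show ?thesis
    unfolding iso_to_Kkk_def by blast
qed

lemma two_times_choose_two: "2 * (k choose 2) = k * (k - 1)"
proof -
  have "even (k * (k - 1))"
    by auto
  then show ?thesis
    unfolding choose_two by (metis dvd_mult_div_cancel)
qed

locale regular_graph =
  fixes V :: "'a set" and E :: "'a \<Rightarrow> 'a \<Rightarrow> bool" and k :: nat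
  assumes simple_graph: "simple_graph V E" and regular: "regular V E k"
begin

lemma finite_V: "finite V"
  and edge_in_V: "E u v \<Longrightarrow> u \<in> V" "E u v \<Longrightarrow> v \<in> V"
  and edge_sym: "E u v \<Longrightarrow> E v u"
  and edge_irrefl: "\<not> E v v"
  using simple_graph unfolding simple_graph_def by simp_all

lemma finite_neighbours: "finite (neighbours V E v)"
  using finite_V unfolding neighbours_def by simp

lemma neighbours_subset_V: "neighbours V E v \<subseteq> V"
  unfolding neighbours_def by auto

lemma mem_neighbours_iff: "u \<in> neighbours V E v \<longleftrightarrow> E v u"
  unfolding neighbours_def using edge_in_V by auto

lemma card_neighbours: "v \<in> V \<Longrightarrow> card (neighbours V E v) = k"
  using regular unfolding regular_def by blast

lemma neighbours_eq_if_subset: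
  assumes "u \<in> V" "v \<in> V" "neighbours V E u \<subseteq> neighbours V E v"
  shows "neighbours V E u = neighbours V E v"
  using card_subset_eq[OF finite_neighbours assms(3)] card_neighbours assms(1,2) by simp

end

locale regular_graph_vertex = regular_graph +
  fixes x :: 'a
  assumes x_in_V: "x \<in> V"
begin

abbreviation N :: "'a set" where
  "N \<equiv> neighbours V E x"

lemma finite_N: "finite N" and card_N: "card N = k"
  using finite_neighbours card_neighbours[OF x_in_V] by auto

definition inner_non_neighbours :: "'a \<Rightarrow> 'a set" where
  "inner_non_neighbours a = {b \<in> N. b \<noteq> a \<and> \<not> E a b}"

definition outer_non_neighbours :: "'a \<Rightarrow> 'a set" where
  "outer_non_neighbours a = {c \<in> V - N. c \<noteq> x \<and> \<not> E a c}"

definition cotriangle_pairs :: "'a \<Rightarrow> ('a \<times> 'a) set" where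
  "cotriangle_pairs a =
     {(b, c). b \<in> inner_non_neighbours a \<and> c \<in> outer_non_neighbours a \<and> \<not> E b c}"

lemma finite_cotriangle_pairs: "finite (cotriangle_pairs a)"
proof -
  have "cotriangle_pairs a \<subseteq> N \<times> V"
    unfolding cotriangle_pairs_def inner_non_neighbours_def outer_non_neighbours_def by auto
  then show ?thesis
    using finite_subset finite_N finite_V by blast
qed

lemma card_cotriangle_pairs_le_product:
  "card (cotriangle_pairs a) \<le> card (inner_non_neighbours a) * card (outer_non_neighbours a)"
proof -
  have "cotriangle_pairs a \<subseteq> inner_non_neighbours a \<times> outer_non_neighbours a"
    unfolding cotriangle_pairs_def by auto
  moreover have "finite (inner_non_neighbours a \<times> outer_non_neighbours a)"
    using finite_N finite_V unfolding inner_non_neighbours_def outer_non_neighbours_def by simp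
  ultimately show ?thesis
    by (metis card_mono card_cartesian_product)
qed

lemma card_inner_non_neighbours:
  assumes "a \<in> N"
  shows "card (inner_non_neighbours a) + card (N \<inter> neighbours V E a) = k - 1"
proof -
  have "N - {a} = inner_non_neighbours a \<union> (N \<inter> neighbours V E a)"
    and disjoint: "inner_non_neighbours a \<inter> (N \<inter> neighbours V E a) = {}"
    unfolding inner_non_neighbours_def using mem_neighbours_iff edge_irrefl by auto
  moreover have "card (N - {a}) = k - 1"
    using assms finite_N card_N by simp
  moreover have "finite (inner_non_neighbours a)"
    using finite_N unfolding inner_non_neighbours_def by simp
  ultimately show ?thesis
    using card_Un_disjoint[OF _ _ disjoint] finite_N by simp
qed

lemma card_outer_non_neighbours:
  assumes "a \<in> N"
  shows "card (outer_non_neighbours a) + 2 * k = card V + card (N \<inter> neighbours V E a)"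
proof -
  let ?Na = "neighbours V E a"
  have "E a x"
    using assms edge_sym mem_neighbours_iff by blast
  then have "V = outer_non_neighbours a \<union> N \<union> (?Na - N)"
    using x_in_V neighbours_subset_V mem_neighbours_iff
    unfolding outer_non_neighbours_def by blast
  moreover have "outer_non_neighbours a \<inter> N = {}" "(outer_non_neighbours a \<union> N) \<inter> (?Na - N) = {}"
    unfolding outer_non_neighbours_def using mem_neighbours_iff by auto
  moreover have "finite (outer_non_neighbours a)"
    using finite_V unfolding outer_non_neighbours_def by simp
  ultimately have "card V = card (outer_non_neighbours a) + k + card (?Na - N)"
    using card_Un_disjoint finite_N card_N finite_neighbours by (metis finite_Diff finite_Un)
  moreover have "card ?Na = card (?Na - N) + card (N \<inter> ?Na)"
    using card_Int_Diff[OF finite_neighbours, where B = N] by (simp add: Int_commute)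
  ultimately show ?thesis
    using card_neighbours[OF neighbours_subset_V[THEN subsetD, OF assms]] by linarith
qed

definition inner_adj_cotriangles :: "'a set set" where
  "inner_adj_cotriangles = {T \<in> adj_cotriangles V E x. T \<subseteq> N}"

definition mixed_adj_cotriangles :: "'a set set" where
  "mixed_adj_cotriangles = adj_cotriangles V E x - inner_adj_cotriangles"

lemma finite_adj_cotriangles: "finite (adj_cotriangles V E x)"
proof -
  have "adj_cotriangles V E x \<subseteq> Pow V"
    unfolding adj_cotriangles_def cotriangle_def by auto
  then show ?thesis
    using finite_V finite_subset by blast
qed

lemma card_adj_cotriangles_split:
  "card (adj_cotriangles V E x) = card inner_adj_cotriangles + card mixed_adj_cotriangles"
  using finite_adj_cotriangles card_Diff_subset[of inner_adj_cotriangles "adj_cotriangles V E x"]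
    card_mono[of "adj_cotriangles V E x" inner_adj_cotriangles]
  unfolding mixed_adj_cotriangles_def inner_adj_cotriangles_def by auto

lemma card_inner_adj_cotriangles_le: "card inner_adj_cotriangles \<le> k choose 3"
proof -
  have "inner_adj_cotriangles \<subseteq> {T. T \<subseteq> N \<and> card T = 3}"
    unfolding inner_adj_cotriangles_def adj_cotriangles_def cotriangle_def by auto
  then have "card inner_adj_cotriangles \<le> card {T. T \<subseteq> N \<and> card T = 3}"
    using finite_N by (intro card_mono) auto
  then show ?thesis
    using n_subsets[OF finite_N] card_N by simp
qed

lemma mixed_adj_cotriangle_shape:
  assumes "T \<in> mixed_adj_cotriangles"
  obtains a b c where "T = {a, b, c}" "a \<noteq> b" "a \<in> N" "b \<in> N"
    "(b, c) \<in> cotriangle_pairs a" "(a, c) \<in> cotriangle_pairs b"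
proof -
  have T: "cotriangle V E T" "2 \<le> card {t \<in> T. E x t}" "\<not> T \<subseteq> N"
    using assms
    unfolding mixed_adj_cotriangles_def inner_adj_cotriangles_def adj_cotriangles_def adj_cotriangle_def
    by auto
  then have "finite T"
    unfolding cotriangle_def by (metis card.infinite zero_neq_numeral)
  have "{t \<in> T. E x t} = T \<inter> N"
    using mem_neighbours_iff by auto
  with T(2) \<open>finite T\<close> obtain a b where ab: "a \<in> T \<inter> N" "b \<in> T \<inter> N" "a \<noteq> b"
    by (metis card_le_Suc0_iff_eq finite_Int not_less_eq_eq numeral_2_eq_2)
  obtain c where c: "c \<in> T" "c \<notin> N"
    using T(3) by auto
  have indep: "T \<subseteq> V" "card T = 3" "\<forall>u \<in> T. \<forall>v \<in> T. \<not> E u v"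
    using T(1) unfolding cotriangle_def by auto
  then have "c \<noteq> x"
    using ab c by (auto simp: mem_neighbours_iff)
  have "c \<noteq> a" "c \<noteq> b"
    using ab c by auto
  then have "card {a, b, c} = card T"
    using indep(2) ab by simp
  then have "T = {a, b, c}"
    using ab c \<open>finite T\<close> by (intro card_subset_eq[symmetric]) auto
  moreover have "(b, c) \<in> cotriangle_pairs a" "(a, c) \<in> cotriangle_pairs b"
    using ab c indep \<open>c \<noteq> x\<close>
    unfolding cotriangle_pairs_def inner_non_neighbours_def outer_non_neighbours_def by auto
  ultimately show ?thesis
    using that ab by blast
qed

lemma double_card_mixed_adj_cotriangles_le:
  "2 * card mixed_adj_cotriangles \<le> (\<Sum>a\<in>N. card (cotriangle_pairs a))"
proof -
  define S where "S = Sigma N cotriangle_pairs"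
  define fibre where "fibre T = {(a, b, c) \<in> S. {a, b, c} = T}" for T
  have "finite S"
    using finite_N finite_cotriangle_pairs unfolding S_def by simp
  have finite_fibre: "finite (fibre T)" for T
    by (rule finite_subset[OF _ \<open>finite S\<close>]) (auto simp: fibre_def)
  have two_le_fibre: "2 \<le> card (fibre T)" if T: "T \<in> mixed_adj_cotriangles" for T
  proof -
    obtain a b c where "T = {a, b, c}" "a \<noteq> b" "a \<in> N" "b \<in> N"
      "(b, c) \<in> cotriangle_pairs a" "(a, c) \<in> cotriangle_pairs b"
      using mixed_adj_cotriangle_shape[OF T] .
    then have "{(a, b, c), (b, a, c)} \<subseteq> fibre T"
      unfolding fibre_def S_def by auto
    then have "card {(a, b, c), (b, a, c)} \<le> card (fibre T)"
      using finite_fibre by (rule card_mono[rotated])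
    then show ?thesis
      using \<open>a \<noteq> b\<close> by simp
  qed
  have "finite mixed_adj_cotriangles"
    using finite_adj_cotriangles unfolding mixed_adj_cotriangles_def by simp
  have "2 * card mixed_adj_cotriangles = (\<Sum>T\<in>mixed_adj_cotriangles. 2)"
    by simp
  also have "\<dots> \<le> (\<Sum>T\<in>mixed_adj_cotriangles. card (fibre T))"
    using two_le_fibre by (rule sum_mono)
  also have "\<dots> = card (\<Union>T\<in>mixed_adj_cotriangles. fibre T)"
    using \<open>finite mixed_adj_cotriangles\<close> finite_fibre
    by (intro card_UN_disjoint[symmetric]) (auto simp: fibre_def)
  also have "\<dots> \<le> card S"
    using \<open>finite S\<close> by (intro card_mono) (auto simp: fibre_def)
  also have "\<dots> = (\<Sum>a\<in>N. card (cotriangle_pairs a))"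
    unfolding S_def using finite_N finite_cotriangle_pairs by simp
  finally show ?thesis .
qed

context
  assumes order_ge: "3 * k \<le> card V"
begin

lemma card_non_neighbours_product:
  assumes "a \<in> N"
  shows "card (inner_non_neighbours a) * card (outer_non_neighbours a) \<le> (k - 1) * (card V - 2 * k)"
    and "card (inner_non_neighbours a) * card (outer_non_neighbours a) = (k - 1) * (card V - 2 * k)
           \<Longrightarrow> N \<inter> neighbours V E a = {}"
proof -
  define p where "p = card (inner_non_neighbours a)"
  define d where "d = card (N \<inter> neighbours V E a)"
  define r where "r = card V - 2 * k"
  have "k \<ge> 1"
    using assms card_N by (metis One_nat_def card_gt_0_iff empty_iff finite_N Suc_leI)
  then have "p < r" and "k - 1 = p + d"
    using card_inner_non_neighbours[OF assms] order_ge unfolding p_def d_def r_def by linarith+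
  moreover have "card (outer_non_neighbours a) = r + d"
    using card_outer_non_neighbours[OF assms] order_ge unfolding d_def r_def by linarith
  ultimately show "p * card (outer_non_neighbours a) \<le> (k - 1) * r"
    and "p * card (outer_non_neighbours a) = (k - 1) * r \<Longrightarrow> N \<inter> neighbours V E a = {}"
    using mult_add_le_add_mult[of p r d] mult_add_eq_add_mult_imp_eq_0[of p r d] finite_N
    unfolding d_def by (simp_all add: le_less)
qed

lemma card_cotriangle_pairs_le:
  "a \<in> N \<Longrightarrow> card (cotriangle_pairs a) \<le> (k - 1) * (card V - 2 * k)"
  using card_cotriangle_pairs_le_product card_non_neighbours_product(1) by (meson le_trans)

lemma cotriangle_pairs_full:
  assumes "a \<in> N" and "card (cotriangle_pairs a) = (k - 1) * (card V - 2 * k)"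
  shows "cotriangle_pairs a = inner_non_neighbours a \<times> outer_non_neighbours a"
    and "N \<inter> neighbours V E a = {}"
proof -
  have product: "card (inner_non_neighbours a) * card (outer_non_neighbours a) = card (cotriangle_pairs a)"
    using card_cotriangle_pairs_le_product card_non_neighbours_product(1)[OF assms(1)] assms(2)
    by (metis le_antisym)
  then show "N \<inter> neighbours V E a = {}"
    using card_non_neighbours_product(2)[OF assms(1)] assms(2) by simp
  have "finite (inner_non_neighbours a \<times> outer_non_neighbours a)"
    using finite_N finite_V unfolding inner_non_neighbours_def outer_non_neighbours_def by simp
  moreover have "cotriangle_pairs a \<subseteq> inner_non_neighbours a \<times> outer_non_neighbours a"
    unfolding cotriangle_pairs_def by auto
  ultimately show "cotriangle_pairs a = inner_non_neighbours a \<times> outer_non_neighbours a"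
    using product by (metis card_subset_eq card_cartesian_product)
qed

lemma sum_cotriangle_pairs_bound:
  "(\<Sum>a\<in>N. (k - 1) * (card V - 2 * k)) = 2 * ((k choose 2) * (card V - 2 * k))"
  using card_N two_times_choose_two[of k] by (simp add: mult.assoc)

lemma sum_card_cotriangle_pairs_le:
  "(\<Sum>a\<in>N. card (cotriangle_pairs a)) \<le> 2 * ((k choose 2) * (card V - 2 * k))"
proof -
  have "(\<Sum>a\<in>N. card (cotriangle_pairs a)) \<le> (\<Sum>a\<in>N. (k - 1) * (card V - 2 * k))"
    using card_cotriangle_pairs_le by (rule sum_mono)
  then show ?thesis
    unfolding sum_cotriangle_pairs_bound .
qed

lemma card_mixed_adj_cotriangles_le: "card mixed_adj_cotriangles \<le> (k choose 2) * (card V - 2 * k)"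
  using double_card_mixed_adj_cotriangles_le sum_card_cotriangle_pairs_le by linarith

lemma card_adj_cotriangles_le:
  "card (adj_cotriangles V E x) \<le> (k choose 2) * (card V - 2 * k) + (k choose 3)"
  using card_adj_cotriangles_split card_inner_adj_cotriangles_le card_mixed_adj_cotriangles_le
  by linarith

context
  assumes extremal: "card (adj_cotriangles V E x) = (k choose 2) * (card V - 2 * k) + (k choose 3)"
begin

lemma card_cotriangle_pairs_eq:
  assumes "a \<in> N"
  shows "card (cotriangle_pairs a) = (k - 1) * (card V - 2 * k)"
proof -
  have "card mixed_adj_cotriangles = (k choose 2) * (card V - 2 * k)"
    using extremal card_adj_cotriangles_split card_inner_adj_cotriangles_le
      card_mixed_adj_cotriangles_le by linarith
  then have "(\<Sum>a\<in>N. card (cotriangle_pairs a)) = (\<Sum>a\<in>N. (k - 1) * (card V - 2 * k))"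
    using double_card_mixed_adj_cotriangles_le sum_card_cotriangle_pairs_le
      sum_cotriangle_pairs_bound by linarith
  from sum_mono_inv[OF this card_cotriangle_pairs_le assms finite_N] show ?thesis .
qed

lemma N_independent: "a \<in> N \<Longrightarrow> N \<inter> neighbours V E a = {}"
  using cotriangle_pairs_full(2) card_cotriangle_pairs_eq by blast

text \<open>A common neighbour \<open>c\<close> of \<open>b\<close> missed by \<open>a\<close> would give a pair \<open>(b, c)\<close> of non-neighbours
  of \<open>a\<close> missing from \<open>cotriangle_pairs a\<close>.\<close>
lemma neighbours_of_N_subset:
  assumes "a \<in> N" "b \<in> N"
  shows "neighbours V E b \<subseteq> neighbours V E a"
proof
  fix c
  assume "c \<in> neighbours V E b"
  then have "E b c" "c \<in> V" "c \<notin> N"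
    using mem_neighbours_iff neighbours_subset_V N_independent[OF assms(2)] by auto
  have "E a c"
  proof (rule ccontr)
    assume "\<not> E a c"
    moreover have "E a x"
      using assms(1) mem_neighbours_iff edge_sym by blast
    ultimately have "c \<in> outer_non_neighbours a"
      using \<open>c \<in> V\<close> \<open>c \<notin> N\<close> unfolding outer_non_neighbours_def by auto
    moreover have "b \<in> inner_non_neighbours a"
      using assms N_independent[OF assms(1)] \<open>\<not> E a c\<close> \<open>E b c\<close> mem_neighbours_iff
      unfolding inner_non_neighbours_def by auto
    ultimately have "(b, c) \<in> cotriangle_pairs a"
      using cotriangle_pairs_full(1)[OF assms(1) card_cotriangle_pairs_eq[OF assms(1)]] by simp
    then show False
      using \<open>E b c\<close> unfolding cotriangle_pairs_def by simp
  qed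
  then show "c \<in> neighbours V E a"
    using mem_neighbours_iff by simp
qed

lemma neighbours_of_N_eq:
  assumes "a \<in> N" "b \<in> N"
  shows "neighbours V E b = neighbours V E a"
proof (rule neighbours_eq_if_subset)
  show "b \<in> V" "a \<in> V"
    using assms neighbours_subset_V by blast+
  show "neighbours V E b \<subseteq> neighbours V E a"
    using assms by (rule neighbours_of_N_subset)
qed

lemma neighbours_eq_N_if_second_neighbour:
  assumes "a \<in> N" "r \<in> neighbours V E a"
  shows "neighbours V E r = N"
proof -
  have "r \<in> V"
    using assms(2) neighbours_subset_V by blast
  have "N \<subseteq> neighbours V E r"
  proof
    fix u
    assume "u \<in> N"
    then have "E u r"
      using assms neighbours_of_N_eq mem_neighbours_iff by metis
    then show "u \<in> neighbours V E r"
      using edge_sym mem_neighbours_iff by blast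
  qed
  from neighbours_eq_if_subset[OF x_in_V \<open>r \<in> V\<close> this] show ?thesis
    by simp
qed

lemma component_iso_to_Kkk:
  assumes "k \<ge> 1"
  shows "iso_to_Kkk (component V E x) E k"
proof -
  obtain a where "a \<in> N"
    using assms card_N by (metis card.empty ex_in_conv not_one_le_zero)
  define R where "R = neighbours V E a"
  have neighbours_N: "u \<in> N \<Longrightarrow> neighbours V E u = R" for u
    using neighbours_of_N_eq \<open>a \<in> N\<close> unfolding R_def by blast
  have neighbours_R: "u \<in> R \<Longrightarrow> neighbours V E u = N" for u
    using neighbours_eq_N_if_second_neighbour \<open>a \<in> N\<close> unfolding R_def by blast
  have "N \<inter> R = {}" "x \<in> R"
    using N_independent \<open>a \<in> N\<close> mem_neighbours_iff edge_sym unfolding R_def by auto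
  have adj: "E u v \<longleftrightarrow> v \<in> neighbours V E u" for u v
    using mem_neighbours_iff by simp
  have "component V E x = N \<union> R"
  proof (rule component_eq_if_closed)
    show "N \<union> R \<subseteq> V"
      using neighbours_subset_V unfolding R_def by blast
    show "E\<^sup>*\<^sup>* x y" if "y \<in> N \<union> R" for y
      using that \<open>a \<in> N\<close> adj neighbours_N neighbours_R \<open>x \<in> R\<close>
      by (metis Un_iff converse_rtranclp_into_rtranclp r_into_rtranclp)
    show "v \<in> N \<union> R" if "u \<in> N \<union> R" "E u v" for u v
      using that adj neighbours_N neighbours_R by blast
  qed (use \<open>x \<in> R\<close> in blast)
  moreover have "iso_to_Kkk (N \<union> R) E k"
  proof (rule iso_to_Kkk_if_complete_bipartite)
    show "finite N" "finite R" "card N = k" "card R = k"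
      using finite_N finite_neighbours card_N card_neighbours neighbours_subset_V \<open>a \<in> N\<close>
      unfolding R_def by auto
    show "E u v \<longleftrightarrow> (u \<in> N) \<noteq> (v \<in> N)" if "u \<in> N \<union> R" "v \<in> N \<union> R" for u v
      using that \<open>N \<inter> R = {}\<close> adj neighbours_N neighbours_R by blast
  qed (use \<open>N \<inter> R = {}\<close> in simp)
  ultimately show ?thesis
    by simp
qed

end

end

end

theorem mainTheorem5:
  fixes V :: "'a set" and E :: "'a \<Rightarrow> 'a \<Rightarrow> bool" and k n :: nat and x :: 'a
  assumes "simple_graph V E"
    and "regular V E k"
    and "k \<ge> 1"
    and "card V = n"
    and "n \<ge> 4 * k"
    and "x \<in> V"
  shows "card (adj_cotriangles V E x) \<le> (k choose 2) * (n - 2 * k) + (k choose 3)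
     \<and> (card (adj_cotriangles V E x) = (k choose 2) * (n - 2 * k) + (k choose 3)
           \<longrightarrow> iso_to_Kkk (component V E x) E k)"
proof -
  interpret regular_graph_vertex V E k x
    using assms(1,2,6) by unfold_locales
  have "3 * k \<le> card V"
    using assms(4,5) by simp
  then show ?thesis
    using card_adj_cotriangles_le component_iso_to_Kkk assms(3,4) by blast
qed

end
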